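(* Let $\mathcal{C}$ be a class of hypergraphs that is closed under taking projections. If $\mathcal{C}$ has unbounded dual VC dimension, then for any integer $k$ there exists a hypergraph $\mathcal{H}$ in $\mathcal{C}$ with $2^k-1$ vertices and a test cover of size $k$.
   Context: For a hypergraph $\mathcal{H}=(V,\mathcal{E})$ and $X\subseteq V$, the projection of $\mathcal{H}$ on $X$ is the hypergraph $\mathcal{H}_{|X}$ on vertex set $X$ with hyperedges $\{e\cap X: e\in\mathcal{E}\}$. A set $X$ is shattered if $|\mathcal{H}_{|X}|=2^{|X|}$; the VC dimension is the maximum size of a shattered set. The dual hypergraph $\mathcal{H}^*$ has the hyperedges of $\mathcal{H}$ as vertices and, for each vertex $v$ of $\mathcal{H}$, a hyperedge consisting of the hyperedges containing $v$; the dual VC dimension of $\mathcal{H}$ is the VC dimension of $\mathcal{H}^*$. A test cover of $\mathcal{H}$ is a set of hyperedges such that every vertex lies in one of them and every pair of distinct vertices is separated by one of them (one contains exactly one of the two vertices). *)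

theory Defs
  imports Main
begin

type_synonym 'a hypergraph = "'a set \<times> 'a set set"

definition verts :: "'a hypergraph \<Rightarrow> 'a set" where
  "verts H = fst H"

definition hedges :: "'a hypergraph \<Rightarrow> 'a set set" where
  "hedges H = snd H"

definition hypergraph :: "'a hypergraph \<Rightarrow> bool" where
  "hypergraph H \<longleftrightarrow> finite (verts H) \<and> (\<forall>e\<in>hedges H. e \<subseteq> verts H)"

definition proj :: "'a hypergraph \<Rightarrow> 'a set \<Rightarrow> 'a hypergraph" where
  "proj H X = (X, (\<lambda>e. e \<inter> X) ` hedges H)"

definition shattered :: "'a hypergraph \<Rightarrow> 'a set \<Rightarrow> bool" where
  "shattered H X \<longleftrightarrow> card (hedges (proj H X)) = 2 ^ card X"

definition vc_dim :: "'a hypergraph \<Rightarrow> nat" where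
  "vc_dim H = Max {card X | X. X \<subseteq> verts H \<and> shattered H X}"

definition dual :: "'a hypergraph \<Rightarrow> 'a set hypergraph" where
  "dual H = (hedges H, (\<lambda>v. {e \<in> hedges H. v \<in> e}) ` verts H)"

definition dual_vc_dim :: "'a hypergraph \<Rightarrow> nat" where
  "dual_vc_dim H = vc_dim (dual H)"

definition test_cover :: "'a hypergraph \<Rightarrow> 'a set set \<Rightarrow> bool" where
  "test_cover H T \<longleftrightarrow> T \<subseteq> hedges H
     \<and> (\<forall>v\<in>verts H. \<exists>e\<in>T. v \<in> e)
     \<and> (\<forall>u\<in>verts H. \<forall>v\<in>verts H. u \<noteq> v \<longrightarrow> (\<exists>e\<in>T. (u \<in> e) \<noteq> (v \<in> e)))"

definition closed_under_projections :: "'a hypergraph set \<Rightarrow> bool" where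
  "closed_under_projections C \<longleftrightarrow> (\<forall>H\<in>C. \<forall>X. X \<subseteq> verts H \<longrightarrow> proj H X \<in> C)"

end

theory Submission
  imports Defs
begin

text \<open>Take a hypergraph in the class whose dual shatters a set Y of k hyperedges: for every
nonempty S \<subseteq> Y some vertex lies in exactly the hyperedges of S. Projecting on one such vertex
per S gives 2^k - 1 vertices, and the traces of Y form a test cover, since the vertex chosen
for S is covered by any edge of S and separated from the one chosen for S' \<noteq> S by an edge
of S \<triangle> S'.\<close>

lemma finite_hedges:
  assumes "hypergraph H"
  shows "finite (hedges H)"
proof -
  have "hedges H \<subseteq> Pow (verts H)" "finite (verts H)"
    using assms unfolding hypergraph_def by auto
  then show ?thesis
    using finite_subset by blast
qed

lemma hypergraph_dual: "hypergraph H \<Longrightarrow> hypergraph (dual H)"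
  using finite_hedges[of H] unfolding hypergraph_def dual_def by (auto simp: verts_def hedges_def)

lemma vc_dim_attained:
  assumes "hypergraph H" and "vc_dim H \<noteq> Max {}"
  obtains X where "X \<subseteq> verts H" "shattered H X" "card X = vc_dim H"
proof -
  define A where "A = {card X | X. X \<subseteq> verts H \<and> shattered H X}"
  have vc_dim_eq: "vc_dim H = Max A"
    unfolding vc_dim_def A_def ..
  have "A \<subseteq> {..card (verts H)}"
    using assms(1) unfolding A_def hypergraph_def by (auto intro: card_mono)
  then have "finite A"
    by (rule finite_subset) simp
  moreover have "A \<noteq> {}"
    using assms(2) vc_dim_eq by auto
  ultimately have "Max A \<in> A"
    by (rule Max_in)
  then obtain X where "X \<subseteq> verts H" "shattered H X" "card X = Max A"
    unfolding A_def by auto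
  then show thesis
    using that vc_dim_eq by simp
qed

lemma shattered_traces:
  assumes "hypergraph H" and "X \<subseteq> verts H" and "shattered H X" and "S \<subseteq> X"
  shows "\<exists>e\<in>hedges H. e \<inter> X = S"
proof -
  have fin: "finite X"
    using assms(1,2) finite_subset unfolding hypergraph_def by blast
  have "hedges (proj H X) \<subseteq> Pow X"
    by (auto simp: proj_def hedges_def)
  moreover have "card (hedges (proj H X)) = card (Pow X)"
    using assms(3) fin by (simp add: shattered_def card_Pow)
  ultimately have "hedges (proj H X) = Pow X"
    using fin by (simp add: card_subset_eq)
  then have "S \<in> (\<lambda>e. e \<inter> X) ` hedges H"
    using assms(4) by (simp add: proj_def hedges_def)
  then show ?thesis
    by blast
qed

lemma dual_shattered_traces:
  assumes "hypergraph H" and "Y \<subseteq> hedges H" and "shattered (dual H) Y" and "S \<subseteq> Y"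
  shows "\<exists>v\<in>verts H. {e\<in>Y. v \<in> e} = S"
proof -
  have "Y \<subseteq> verts (dual H)"
    using assms(2) by (simp add: dual_def verts_def)
  then obtain D where "D \<in> hedges (dual H)" "D \<inter> Y = S"
    using shattered_traces[OF hypergraph_dual[OF assms(1)] _ assms(3,4)] by auto
  moreover obtain v where "v \<in> verts H" "D = {e \<in> hedges H. v \<in> e}"
    using \<open>D \<in> hedges (dual H)\<close> by (auto simp: dual_def hedges_def)
  ultimately show ?thesis
    using assms(2) by auto
qed

lemma test_cover_proj_of_dual_shattered:
  assumes Y: "Y \<subseteq> hedges H" "finite Y"
    and witness: "\<And>S. S \<subseteq> Y \<Longrightarrow> \<exists>v\<in>verts H. {e\<in>Y. v \<in> e} = S"
  obtains W where "W \<subseteq> verts H" "card W = 2 ^ card Y - 1"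
    "test_cover (proj H W) ((\<lambda>e. e \<inter> W) ` Y)" "card ((\<lambda>e. e \<inter> W) ` Y) = card Y"
proof -
  obtain f where f: "\<And>S. S \<subseteq> Y \<Longrightarrow> f S \<in> verts H \<and> {e\<in>Y. f S \<in> e} = S"
    using witness by metis
  define P where "P = Pow Y - {{}}"
  define W where "W = f ` P"
  have f_mem: "f S \<in> e \<longleftrightarrow> e \<in> S" if "S \<in> P" "e \<in> Y" for S e
    using f[of S] that unfolding P_def by blast
  have "inj_on f P"
    by (rule inj_onI) (metis DiffD1 PowD P_def f)
  then have card_W: "card W = 2 ^ card Y - 1"
    using Y(2) by (simp add: W_def P_def card_image card_Pow)
  have "inj_on (\<lambda>e. e \<inter> W) Y"
  proof (rule inj_onI)
    fix e e' assume e: "e \<in> Y" "e' \<in> Y" "e \<inter> W = e' \<inter> W"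
    have "{e} \<in> P" "{e'} \<in> P"
      using e unfolding P_def by auto
    then have "f {e} \<in> e \<inter> W" "f {e} \<in> e' \<inter> W \<longleftrightarrow> e' = e"
      using e f_mem unfolding W_def by auto
    then show "e = e'"
      using e(3) by auto
  qed
  then have card_T: "card ((\<lambda>e. e \<inter> W) ` Y) = card Y"
    by (simp add: card_image)
  have verts_proj: "verts (proj H W) = W"
    by (simp add: proj_def verts_def)
  have "test_cover (proj H W) ((\<lambda>e. e \<inter> W) ` Y)"
    unfolding test_cover_def verts_proj
  proof (intro conjI ballI impI)
    show "(\<lambda>e. e \<inter> W) ` Y \<subseteq> hedges (proj H W)"
      using Y(1) by (auto simp: proj_def hedges_def)
  next
    fix v assume "v \<in> W"
    then obtain S e where "S \<in> P" "v = f S" "e \<in> S"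
      unfolding W_def P_def by auto
    then have "e \<in> Y" "v \<in> e \<inter> W"
      using \<open>v \<in> W\<close> f_mem P_def by auto
    then show "\<exists>T\<in>(\<lambda>e. e \<inter> W) ` Y. v \<in> T"
      by (intro bexI[of _ "e \<inter> W"] imageI) auto
  next
    fix u v assume "u \<in> W" "v \<in> W" "u \<noteq> v"
    then obtain S S' where S: "S \<in> P" "u = f S" "S' \<in> P" "v = f S'" "S \<noteq> S'"
      unfolding W_def by auto
    then obtain e where "e \<in> Y" "(e \<in> S) \<noteq> (e \<in> S')"
      unfolding P_def by blast
    then have "(u \<in> e \<inter> W) \<noteq> (v \<in> e \<inter> W)"
      using S f_mem \<open>u \<in> W\<close> \<open>v \<in> W\<close> by auto
    then show "\<exists>T\<in>(\<lambda>e. e \<inter> W) ` Y. (u \<in> T) \<noteq> (v \<in> T)"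
      using \<open>e \<in> Y\<close> by (intro bexI[of _ "e \<inter> W"] imageI) auto
  qed
  moreover have "W \<subseteq> verts H"
    using f unfolding W_def P_def by blast
  ultimately show thesis
    using that card_W card_T by blast
qed

theorem proposition2:
  fixes C :: "'a hypergraph set" and k :: nat
  assumes "\<forall>H\<in>C. hypergraph H"
    and "closed_under_projections C"
    and "\<forall>d. \<exists>H\<in>C. dual_vc_dim H \<ge> d"
  shows "\<exists>H\<in>C. card (verts H) = 2 ^ k - 1 \<and> (\<exists>T. test_cover H T \<and> card T = k)"
proof -
  \<comment> \<open>Exceeding the junk value Max {} guarantees that the maximum defining vc_dim is attained.\<close>
  obtain H where "H \<in> C" and dim: "dual_vc_dim H \<ge> k + Suc (Max {})"
    using assms(3) by blast
  have H: "hypergraph H"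
    using \<open>H \<in> C\<close> assms(1) by blast
  have dim_dual: "vc_dim (dual H) \<noteq> Max {}" "vc_dim (dual H) \<ge> k"
    using dim unfolding dual_vc_dim_def by auto
  obtain X where "X \<subseteq> verts (dual H)" "shattered (dual H) X" "card X = vc_dim (dual H)"
    by (rule vc_dim_attained[OF hypergraph_dual[OF H] dim_dual(1)])
  then have X: "X \<subseteq> hedges H" "shattered (dual H) X" "k \<le> card X"
    using dim_dual(2) by (simp_all add: dual_def verts_def)
  obtain Y where Y: "Y \<subseteq> X" "card Y = k" "finite Y"
    by (rule obtain_subset_with_card_n[OF X(3)])
  have "Y \<subseteq> hedges H"
    using X(1) Y(1) by blast
  moreover have "\<exists>v\<in>verts H. {e\<in>Y. v \<in> e} = S" if "S \<subseteq> Y" for S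
    using dual_shattered_traces[OF H X(1,2), of S] that Y(1) by blast
  ultimately obtain W where "W \<subseteq> verts H" "card W = 2 ^ card Y - 1"
    "test_cover (proj H W) ((\<lambda>e. e \<inter> W) ` Y)" "card ((\<lambda>e. e \<inter> W) ` Y) = card Y"
    by (rule test_cover_proj_of_dual_shattered[OF _ Y(3)])
  moreover have "proj H W \<in> C"
    using assms(2) \<open>H \<in> C\<close> \<open>W \<subseteq> verts H\<close> unfolding closed_under_projections_def by blast
  ultimately show ?thesis
    using Y(2) by (intro bexI[of _ "proj H W"]) (auto simp: proj_def verts_def)
qed

end
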